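(* Let $F=\begin{pmatrix}-1&-1&-1\\-1&8&-1\\-1&-1&-1\end{pmatrix}$ (edge detect C filter). Then the equation $F*X=B$ with the zero boundary condition, for unknown $X\in\mathbb{R}^{m\times n}$, has a unique solution for every $B\in\mathbb{R}^{m\times n}$ (for all $m,n\in\mathbb{N}$).
   Context: For $F=[f_{ij}]\in\mathbb{R}^{3\times3}$ and $X=[x_{ij}]\in\mathbb{R}^{m\times n}$, the convolution $F*X\in\mathbb{R}^{m\times n}$ is defined by $[F*X]_{ij}=\sum_{l_1=1}^3\sum_{l_2=1}^3 f_{l_1l_2}\,x_{i-l_1+2,\,j-l_2+2}$ for $1\le i\le m$, $1\le j\le n$, where under the zero boundary condition all values $x_{ij}$ with $i\in\{0,m+1\}$ or $j\in\{0,n+1\}$ are $0$. *)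

theory Defs
  imports Complex_Main
begin

text \<open>An m x n real matrix is represented as a function nat => nat => real
  with entries indexed by 1..m, 1..n; all entries outside this index range are 0.
  This built-in zero padding realises the zero boundary condition.\<close>

definition rmat :: "nat \<Rightarrow> nat \<Rightarrow> (nat \<Rightarrow> nat \<Rightarrow> real) set" where
  "rmat m n = {X. \<forall>i j. \<not> (1 \<le> i \<and> i \<le> m \<and> 1 \<le> j \<and> j \<le> n) \<longrightarrow> X i j = 0}"

definition xval :: "nat \<Rightarrow> nat \<Rightarrow> (nat \<Rightarrow> nat \<Rightarrow> real) \<Rightarrow> int \<Rightarrow> int \<Rightarrow> real" where
  "xval m n X a b = (if 1 \<le> a \<and> a \<le> int m \<and> 1 \<le> b \<and> b \<le> int n then X (nat a) (nat b) else 0)"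

definition conv3 :: "nat \<Rightarrow> nat \<Rightarrow> (nat \<Rightarrow> nat \<Rightarrow> real) \<Rightarrow> (nat \<Rightarrow> nat \<Rightarrow> real) \<Rightarrow> (nat \<Rightarrow> nat \<Rightarrow> real)" where
  "conv3 m n F X = (\<lambda>i j. if 1 \<le> i \<and> i \<le> m \<and> 1 \<le> j \<and> j \<le> n then
     (\<Sum>l1=1..3. \<Sum>l2=1..3. F l1 l2 * xval m n X (int i - int l1 + 2) (int j - int l2 + 2))
   else 0)"

definition edgeC :: "nat \<Rightarrow> nat \<Rightarrow> real" where
  "edgeC i j = (if i = 2 \<and> j = 2 then 8 else -1)"

end

theory Submission
  imports Defs "HOL-Library.Function_Algebras"
begin

text \<open>Convolution with a fixed 3x3 filter is a linear endomorphism of the finite-dimensional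
  space of m x n matrices, so it is bijective as soon as its kernel is trivial. For a weakly
  diagonally dominant filter this follows from a discrete maximum principle: at an entry of
  maximal modulus of a solution of F * X = 0, dominance forces every neighbour that carries a
  nonzero filter weight to have the same modulus. Walking in the direction of such a neighbour
  carries the maximum into the zero padding outside the matrix, so it is 0. The edge detect C
  filter has centre 8 and eight entries -1, so it is weakly diagonally dominant.\<close>

lemma (in vector_space) linear_inj_on_imp_surj_on:
  assumes lin: "Vector_Spaces.linear scale scale f" and S: "subspace S"
    and fin: "finite B" "S \<subseteq> span B"
    and into: "f ` S \<subseteq> S" and inj: "inj_on f S"
  shows "f ` S = S"
proof (rule ccontr)
  interpret f: Vector_Spaces.linear scale scale f by (fact lin)
  obtain C where C: "C \<subseteq> S" "independent C" "S \<subseteq> span C"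
    using maximal_independent_subset by blast
  have span_C: "span C = S"
    using C span_minimal[OF C(1) S] by blast
  have fin_C: "finite C"
    using independent_span_bound[OF fin(1) C(2)] C(1) fin(2) by blast
  assume "f ` S \<noteq> S"
  then obtain b where b: "b \<in> S" "b \<notin> f ` S"
    using into by blast
  have "independent (f ` C)"
    using f.independent_injective_image[OF C(2)] inj span_C by simp
  moreover have "span (f ` C) = f ` S"
    using f.span_image span_C by simp
  ultimately have "independent (insert b (f ` C))"
    using independent_insertI b by simp
  moreover have "insert b (f ` C) \<subseteq> span C"
    using b into C(1) span_C by auto
  ultimately have "card (insert b (f ` C)) \<le> card C"
    using independent_span_bound[OF fin_C] by blast
  moreover have "card (f ` C) = card C"
    using card_image inj_on_subset[OF inj C(1)] by blast
  moreover have "b \<notin> f ` C"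
    using b C(1) by blast
  ultimately show False
    using fin_C by simp
qed

lemma dominated_sum_attains_bound:
  fixes w y :: "'a \<Rightarrow> real"
  assumes fin: "finite K"
    and dominated: "(\<Sum>k \<in> K. \<bar>w k\<bar>) \<le> c"
    and attained: "c * M \<le> (\<Sum>k \<in> K. \<bar>w k\<bar> * \<bar>y k\<bar>)"
    and bounded: "\<And>k. k \<in> K \<Longrightarrow> \<bar>y k\<bar> \<le> M"
    and k: "k \<in> K" "w k \<noteq> 0"
  shows "\<bar>y k\<bar> = M"
proof -
  have "0 \<le> M"
    using bounded[OF k(1)] by linarith
  with dominated have "(\<Sum>k \<in> K. \<bar>w k\<bar> * M) \<le> c * M"
    by (simp add: mult_right_mono flip: sum_distrib_right)
  with attained have "(\<Sum>k \<in> K. \<bar>w k\<bar> * (M - \<bar>y k\<bar>)) \<le> 0"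
    by (simp add: right_diff_distrib sum_subtractf)
  moreover have nonneg: "\<forall>k \<in> K. 0 \<le> \<bar>w k\<bar> * (M - \<bar>y k\<bar>)"
    using bounded by simp
  ultimately have "(\<Sum>k \<in> K. \<bar>w k\<bar> * (M - \<bar>y k\<bar>)) = 0"
    by (meson antisym sum_nonneg)
  then have "\<bar>w k\<bar> * (M - \<bar>y k\<bar>) = 0"
    using nonneg k(1) by (simp add: sum_nonneg_eq_0_iff[OF fin])
  then show ?thesis
    using k(2) by simp
qed

definition scale_mat :: "real \<Rightarrow> (nat \<Rightarrow> nat \<Rightarrow> real) \<Rightarrow> (nat \<Rightarrow> nat \<Rightarrow> real)" where
  "scale_mat c X = (\<lambda>i j. c * X i j)"

interpretation mat: vector_space scale_mat
  by unfold_locales (auto simp: scale_mat_def fun_eq_iff algebra_simps)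

definition unit_mat :: "nat \<Rightarrow> nat \<Rightarrow> (nat \<Rightarrow> nat \<Rightarrow> real)" where
  "unit_mat a b = (\<lambda>i j. if i = a \<and> j = b then 1 else 0)"

lemma sum_mat_apply: "sum f A i j = (\<Sum>a \<in> A. f a i j)"
  for f :: "'a \<Rightarrow> nat \<Rightarrow> nat \<Rightarrow> real"
  by (induction A rule: infinite_finite_induct) auto

lemma rmat_eq_sum_unit_mat:
  assumes "X \<in> rmat m n"
  shows "X = (\<Sum>(a, b) \<in> {1..m} \<times> {1..n}. scale_mat (X a b) (unit_mat a b))"
proof (intro ext)
  fix i j
  have "(\<Sum>(a, b) \<in> {1..m} \<times> {1..n}. scale_mat (X a b) (unit_mat a b)) i j =
      (\<Sum>p \<in> {1..m} \<times> {1..n}. if p = (i, j) then X i j else 0)"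
    unfolding sum_mat_apply
    by (intro sum.cong) (auto simp: scale_mat_def unit_mat_def split: if_splits)
  also have "\<dots> = X i j"
    using assms by (auto simp: rmat_def)
  finally show "X i j = (\<Sum>(a, b) \<in> {1..m} \<times> {1..n}. scale_mat (X a b) (unit_mat a b)) i j"
    by simp
qed

lemma rmat_subset_span_unit_mat:
  "rmat m n \<subseteq> mat.span ((\<lambda>(a, b). unit_mat a b) ` ({1..m} \<times> {1..n}))"
proof
  fix X
  assume "X \<in> rmat m n"
  then have "X = (\<Sum>(a, b) \<in> {1..m} \<times> {1..n}. scale_mat (X a b) (unit_mat a b))"
    by (rule rmat_eq_sum_unit_mat)
  also have "\<dots> \<in> mat.span ((\<lambda>(a, b). unit_mat a b) ` ({1..m} \<times> {1..n}))"
    unfolding case_prod_beta by (intro mat.span_sum mat.span_scale mat.span_base imageI)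
  finally show "X \<in> mat.span ((\<lambda>(a, b). unit_mat a b) ` ({1..m} \<times> {1..n}))" .
qed

lemma rmat_subspace: "mat.subspace (rmat m n)"
  by (auto simp: mat.subspace_def rmat_def scale_mat_def)

lemma conv3_in_rmat: "conv3 m n F X \<in> rmat m n"
  by (simp add: rmat_def conv3_def)

lemma xval_add: "xval m n (X + Y) a b = xval m n X a b + xval m n Y a b"
  by (simp add: xval_def)

lemma xval_scale_mat: "xval m n (scale_mat c X) a b = c * xval m n X a b"
  by (simp add: xval_def scale_mat_def)

lemma conv3_linear: "Vector_Spaces.linear scale_mat scale_mat (conv3 m n F)"
  by unfold_locales
    (simp_all add: conv3_def xval_add xval_scale_mat[unfolded scale_mat_def] scale_mat_def
      fun_eq_iff sum.distrib sum_distrib_left distrib_left mult.left_commute)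

definition weakly_diag_dominant :: "(nat \<Rightarrow> nat \<Rightarrow> real) \<Rightarrow> bool" where
  "weakly_diag_dominant F \<longleftrightarrow>
     (\<Sum>(l1, l2) \<in> {1..3} \<times> {1..3} - {(2, 2)}. \<bar>F l1 l2\<bar>) \<le> \<bar>F 2 2\<bar>"

lemma conv3_eq_sum_pairs:
  assumes "1 \<le> i" "i \<le> m" "1 \<le> j" "j \<le> n"
  shows "conv3 m n F X i j =
    (\<Sum>(l1, l2) \<in> {1..3} \<times> {1..3}. F l1 l2 * xval m n X (int i - int l1 + 2) (int j - int l2 + 2))"
  using assms by (simp add: conv3_def sum.cartesian_product)

lemma conv3_zero_max_principle:
  assumes dominant: "weakly_diag_dominant F"
    and max: "\<And>a b. \<bar>xval m n X a b\<bar> \<le> \<bar>X i j\<bar>"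
    and ij: "1 \<le> i" "i \<le> m" "1 \<le> j" "j \<le> n"
    and zero: "conv3 m n F X i j = 0"
    and l: "l1 \<in> {1..3}" "l2 \<in> {1..3}" "F l1 l2 \<noteq> 0"
  shows "\<bar>xval m n X (int i - int l1 + 2) (int j - int l2 + 2)\<bar> = \<bar>X i j\<bar>"
proof (cases "(l1, l2) = (2, 2)")
  case True
  then show ?thesis
    using ij by (simp add: xval_def)
next
  case False
  define K where "K = {1..3::nat} \<times> {1..3::nat} - {(2, 2)}"
  define f where "f = (\<lambda>(l1, l2). F l1 l2)"
  define y where "y = (\<lambda>(l1, l2). xval m n X (int i - int l1 + 2) (int j - int l2 + 2))"
  have "0 = (\<Sum>k \<in> {1..3} \<times> {1..3}. f k * y k)"
    using zero conv3_eq_sum_pairs[OF ij, of F X] by (simp add: f_def y_def split_def)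
  also have "\<dots> = F 2 2 * X i j + (\<Sum>k \<in> K. f k * y k)"
    using ij by (simp add: K_def sum.remove[of _ "(2, 2)"] f_def y_def xval_def)
  finally have "F 2 2 * X i j = - (\<Sum>k \<in> K. f k * y k)"
    by linarith
  then have "\<bar>F 2 2\<bar> * \<bar>X i j\<bar> = \<bar>\<Sum>k \<in> K. f k * y k\<bar>"
    by (metis abs_minus_cancel abs_mult)
  also have "\<dots> \<le> (\<Sum>k \<in> K. \<bar>f k\<bar> * \<bar>y k\<bar>)"
    using sum_abs[of "\<lambda>k. f k * y k" K] by (simp add: abs_mult)
  finally have attained: "\<bar>F 2 2\<bar> * \<bar>X i j\<bar> \<le> (\<Sum>k \<in> K. \<bar>f k\<bar> * \<bar>y k\<bar>)" .
  have "(\<Sum>k \<in> K. \<bar>f k\<bar>) \<le> \<bar>F 2 2\<bar>"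
    using dominant by (simp add: weakly_diag_dominant_def K_def f_def case_prod_beta')
  from dominated_sum_attains_bound[OF _ this attained, of "(l1, l2)"]
  have "\<bar>y (l1, l2)\<bar> = \<bar>X i j\<bar>"
    using max False l by (simp add: K_def f_def y_def split_def)
  then show ?thesis
    by (simp add: y_def)
qed

lemma rmat_obtain_abs_max:
  assumes X: "X \<in> rmat m n" and nonzero: "X \<noteq> 0"
  obtains i j where "1 \<le> i" "i \<le> m" "1 \<le> j" "j \<le> n" "X i j \<noteq> 0"
    "\<And>a b. \<bar>xval m n X a b\<bar> \<le> \<bar>X i j\<bar>"
proof -
  define I where "I = {1..m} \<times> {1..n}"
  define g where "g = (\<lambda>(a, b). \<bar>X a b\<bar>)"
  obtain i0 j0 where "X i0 j0 \<noteq> 0"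
    using nonzero by (auto simp: fun_eq_iff)
  then have ij0: "(i0, j0) \<in> I"
    using X by (auto simp: rmat_def I_def)
  have fin: "finite (g ` I)"
    by (simp add: I_def)
  have "Max (g ` I) \<in> g ` I"
    using fin ij0 by (intro Max_in) auto
  then obtain p where p: "p \<in> I" "g p = Max (g ` I)"
    by auto
  have le_max: "g q \<le> g p" if "q \<in> I" for q
    using p fin that by simp
  have "\<bar>xval m n X a b\<bar> \<le> g p" for a b
    using le_max[of "(nat a, nat b)"] le_max[OF ij0]
    by (auto simp: xval_def I_def g_def le_nat_iff nat_le_iff)
  moreover have "g p \<noteq> 0"
    using le_max[OF ij0] \<open>X i0 j0 \<noteq> 0\<close> by (auto simp: g_def)
  ultimately show ?thesis
    using that p(1) by (auto simp: I_def g_def)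
qed

lemma conv3_kernel_trivial:
  assumes dominant: "weakly_diag_dominant F"
    and l: "(l1, l2) \<in> {1..3} \<times> {1..3} - {(2, 2)}" "F l1 l2 \<noteq> 0"
    and X: "X \<in> rmat m n" "conv3 m n F X = 0"
  shows "X = 0"
proof (rule ccontr)
  assume "X \<noteq> 0"
  then obtain i j where ij: "1 \<le> i" "i \<le> m" "1 \<le> j" "j \<le> n" "X i j \<noteq> 0"
    and max: "\<And>a b. \<bar>xval m n X a b\<bar> \<le> \<bar>X i j\<bar>"
    using rmat_obtain_abs_max[OF X(1)] by blast
  define M where "M = \<bar>X i j\<bar>"
  define d1 where "d1 = int l1 - 2"
  define d2 where "d2 = int l2 - 2"
  have step: "\<bar>xval m n X (a - d1) (b - d2)\<bar> = M" if "\<bar>xval m n X a b\<bar> = M" for a b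
  proof -
    have "xval m n X a b \<noteq> 0"
      using that ij(5) by (simp add: M_def)
    then have ab: "1 \<le> a" "a \<le> int m" "1 \<le> b" "b \<le> int n"
      by (auto simp: xval_def split: if_splits)
    then have "xval m n X a b = X (nat a) (nat b)"
      by (simp add: xval_def)
    then have "\<bar>xval m n X c e\<bar> \<le> \<bar>X (nat a) (nat b)\<bar>" for c e
      using max that by (simp add: M_def)
    from conv3_zero_max_principle[OF dominant this, of l1 l2] ab l X(2)
    show ?thesis
      using that \<open>xval m n X a b = X (nat a) (nat b)\<close> by (simp add: d1_def d2_def algebra_simps)
  qed
  have walk: "\<bar>xval m n X (int i - int k * d1) (int j - int k * d2)\<bar> = M" for k
  proof (induction k)
    case 0
    show ?case
      using ij by (simp add: M_def xval_def)
  next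
    case (Suc k)
    show ?case
      using step[OF Suc.IH] by (simp add: algebra_simps)
  qed
  have "l1 \<in> {1, 2, 3}" "l2 \<in> {1, 2, 3}"
    using l(1) by auto
  then have "xval m n X (int i - int (m + n + 1) * d1) (int j - int (m + n + 1) * d2) = 0"
    using l(1) ij by (auto simp: xval_def d1_def d2_def)
  then show False
    using walk[of "m + n + 1"] ij(5) by (simp add: M_def)
qed

lemma conv3_bij_betw_rmat:
  assumes dominant: "weakly_diag_dominant F"
    and l: "(l1, l2) \<in> {1..3} \<times> {1..3} - {(2, 2)}" "F l1 l2 \<noteq> 0"
  shows "bij_betw (conv3 m n F) (rmat m n) (rmat m n)"
proof -
  interpret conv: Vector_Spaces.linear scale_mat scale_mat "conv3 m n F"
    by (rule conv3_linear)
  have "inj_on (conv3 m n F) (rmat m n)"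
    using conv3_kernel_trivial[OF dominant l] by (simp add: conv.inj_on_iff_eq_0[OF rmat_subspace])
  moreover have "conv3 m n F ` rmat m n = rmat m n"
    using mat.linear_inj_on_imp_surj_on[OF conv3_linear rmat_subspace _ rmat_subset_span_unit_mat]
      conv3_in_rmat calculation by blast
  ultimately show ?thesis
    by (simp add: bij_betw_def)
qed

lemma edgeC_weakly_diag_dominant: "weakly_diag_dominant edgeC"
proof -
  define K where "K = {1..3::nat} \<times> {1..3::nat} - {(2, 2)}"
  have "(\<Sum>(l1, l2) \<in> K. \<bar>edgeC l1 l2\<bar>) = (\<Sum>k \<in> K. 1)"
    by (intro sum.cong) (auto simp: K_def edgeC_def split: if_splits)
  also have "\<dots> = 8"
    by (simp add: K_def card_cartesian_product)
  finally show ?thesis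
    by (simp add: weakly_diag_dominant_def K_def edgeC_def)
qed

theorem corollary13:
  fixes m n :: nat
  shows "\<forall>B \<in> rmat m n. \<exists>!X. X \<in> rmat m n \<and> conv3 m n edgeC X = B"
proof -
  have bij: "bij_betw (conv3 m n edgeC) (rmat m n) (rmat m n)"
    by (rule conv3_bij_betw_rmat[OF edgeC_weakly_diag_dominant, of 1 1]) (auto simp: edgeC_def)
  show ?thesis
  proof
    fix B
    assume "B \<in> rmat m n"
    then obtain X where "X \<in> rmat m n" "conv3 m n edgeC X = B"
      using bij by (metis bij_betw_def imageE)
    then show "\<exists>!X. X \<in> rmat m n \<and> conv3 m n edgeC X = B"
      using bij by (auto simp: bij_betw_def dest: inj_onD)
  qed
qed

end
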